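(* For any finite graph $G$, if the VC-dimension of the family $\mathcal{M}(G)$ of maximal independent sets of $G$ (as subsets of $V(G)$) is $d\ge 1$, then $d\le\nu_{\mathrm{bi}}(G)$.
   Context: $\mathcal{M}(G)$ is the set system on ground set $V(G)$ consisting of all maximal independent sets of $G$ (it is the dual of the system $\mathcal{B}(G)=\{K_v\}_{v\in V(G)}$, $K_v=$ set of maximal independent sets containing $v$). The VC-dimension of a set system $\mathcal{F}$ on ground set $X$ is the largest $d$ such that some $S\subseteq X$ with $|S|=d$ satisfies: for every $B\subseteq S$ there is $A\in\mathcal{F}$ with $A\cap S=B$. $\nu_{\mathrm{bi}}(G)$ is the largest $t$ such that $G$ has $2t$ distinct vertices $u_1,\dots,u_t,v_1,\dots,v_t$ with $u_iv_j\in E(G)$ iff $i=j$. *)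

theory Defs
  imports Main
begin

definition finite_graph :: "'a set \<Rightarrow> ('a \<Rightarrow> 'a \<Rightarrow> bool) \<Rightarrow> bool" where
  "finite_graph V E \<longleftrightarrow> finite V \<and> (\<forall>x y. E x y \<longrightarrow> E y x) \<and> (\<forall>x. \<not> E x x)
     \<and> (\<forall>x y. E x y \<longrightarrow> x \<in> V \<and> y \<in> V)"

definition independent_set :: "'a set \<Rightarrow> ('a \<Rightarrow> 'a \<Rightarrow> bool) \<Rightarrow> 'a set \<Rightarrow> bool" where
  "independent_set V E I \<longleftrightarrow> I \<subseteq> V \<and> (\<forall>x\<in>I. \<forall>y\<in>I. \<not> E x y)"

definition maximal_independent_set :: "'a set \<Rightarrow> ('a \<Rightarrow> 'a \<Rightarrow> bool) \<Rightarrow> 'a set \<Rightarrow> bool" where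
  "maximal_independent_set V E I \<longleftrightarrow> independent_set V E I \<and>
     (\<forall>J. independent_set V E J \<and> I \<subseteq> J \<longrightarrow> J = I)"

definition MIS_family :: "'a set \<Rightarrow> ('a \<Rightarrow> 'a \<Rightarrow> bool) \<Rightarrow> 'a set set" where
  "MIS_family V E = {I. maximal_independent_set V E I}"

definition shatters :: "'a set set \<Rightarrow> 'a set \<Rightarrow> bool" where
  "shatters F S \<longleftrightarrow> (\<forall>B\<subseteq>S. \<exists>A\<in>F. A \<inter> S = B)"

definition vc_dim :: "'a set \<Rightarrow> 'a set set \<Rightarrow> nat" where
  "vc_dim X F = Max {card S | S. S \<subseteq> X \<and> shatters F S}"

definition nu_bi :: "'a set \<Rightarrow> ('a \<Rightarrow> 'a \<Rightarrow> bool) \<Rightarrow> nat" where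
  "nu_bi V E = Max {t. \<exists>u v :: nat \<Rightarrow> 'a.
      (\<forall>i<t. u i \<in> V \<and> v i \<in> V) \<and>
      inj_on u {..<t} \<and> inj_on v {..<t} \<and> u ` {..<t} \<inter> v ` {..<t} = {} \<and>
      (\<forall>i<t. \<forall>j<t. E (u i) (v j) \<longleftrightarrow> i = j)}"

end

theory Submission
  imports Defs
begin

text \<open>Let S be a shattered set of size d. As the trace of a maximal independent set, S is itself
  independent. For s \<in> S pick a maximal independent set A with A \<inter> S = S - {s}: since s \<notin> A,
  maximality gives a neighbour w of s in A, and w is adjacent to no other vertex of S, because
  those lie in A as well. The edges s w(s), s \<in> S, form an induced matching of size d.\<close>

lemma independent_set_subset:
  "independent_set V E I \<Longrightarrow> J \<subseteq> I \<Longrightarrow> independent_set V E J"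
  by (auto simp: independent_set_def)

lemma maximal_independent_set_exists:
  assumes "finite V"
  shows "\<exists>I. maximal_independent_set V E I"
proof -
  let ?C = "{I. independent_set V E I}"
  have "finite ?C"
    using assms by (auto simp: independent_set_def intro: finite_subset[of _ "Pow V"])
  moreover have "{} \<in> ?C"
    by (simp add: independent_set_def)
  ultimately obtain I where "I \<in> ?C" "\<forall>J\<in>?C. I \<subseteq> J \<longrightarrow> J = I"
    using finite_has_maximal[of ?C] by blast
  then show ?thesis
    unfolding maximal_independent_set_def by blast
qed

lemma maximal_independent_set_dominating:
  assumes "maximal_independent_set V E A" and "s \<in> V" and "s \<notin> A" and "\<not> E s s"
  shows "\<exists>w\<in>A. E s w \<or> E w s"
proof (rule ccontr)
  assume "\<not> ?thesis"
  moreover have "independent_set V E A"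
    using assms(1) by (simp add: maximal_independent_set_def)
  ultimately have "independent_set V E (insert s A)"
    using assms(2,4) by (auto simp: independent_set_def)
  then have "insert s A = A"
    using assms(1) unfolding maximal_independent_set_def by blast
  with assms(3) show False
    by blast
qed

lemma vc_dim_attained:
  assumes "finite X" and "F \<noteq> {}"
  obtains S where "S \<subseteq> X" "shatters F S" "card S = vc_dim X F"
proof -
  let ?D = "{card S | S. S \<subseteq> X \<and> shatters F S}"
  have "shatters F {}"
    using assms(2) by (auto simp: shatters_def)
  then have "?D \<noteq> {}"
    by blast
  moreover have "finite ?D"
    using assms(1) by (auto intro: finite_subset[of _ "card ` Pow X"])
  ultimately have "vc_dim X F \<in> ?D"
    unfolding vc_dim_def by (rule Max_in[rotated])
  then show ?thesis
    using that by auto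
qed

lemma shattered_by_MIS_family_private_neighbour:
  assumes "finite_graph V E" and "S \<subseteq> V" and "shatters (MIS_family V E) S" and "s \<in> S"
  shows "\<exists>w. E s w \<and> w \<notin> S \<and> (\<forall>t\<in>S. E t w \<longrightarrow> t = s)"
proof -
  have sym: "\<And>x y. E x y \<Longrightarrow> E y x" and irrefl: "\<not> E s s"
    using assms(1) by (auto simp: finite_graph_def)
  obtain A0 where "A0 \<in> MIS_family V E" "A0 \<inter> S = S"
    using assms(3) unfolding shatters_def by blast
  then have S_indep: "independent_set V E S"
    by (auto simp: MIS_family_def maximal_independent_set_def intro: independent_set_subset)
  have "S - {s} \<subseteq> S"
    by blast
  then obtain A where "A \<in> MIS_family V E" and A_trace: "A \<inter> S = S - {s}"
    using assms(3) unfolding shatters_def by blast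
  then have A_max: "maximal_independent_set V E A"
    by (simp add: MIS_family_def)
  then have A_indep: "independent_set V E A"
    by (simp add: maximal_independent_set_def)
  have "s \<notin> A" and "s \<in> V"
    using A_trace assms(2,4) by auto
  then obtain w where "w \<in> A" and "E s w \<or> E w s"
    using maximal_independent_set_dominating[OF A_max _ _ irrefl] by blast
  then have sw: "E s w"
    using sym by blast
  moreover have "w \<notin> S"
    using S_indep sw assms(4) by (auto simp: independent_set_def)
  moreover have "\<not> E t w" if "t \<in> S" "t \<noteq> s" for t
    using that A_trace A_indep \<open>w \<in> A\<close> by (auto simp: independent_set_def)
  ultimately show ?thesis
    by blast
qed

definition induced_matching ::
    "'a set \<Rightarrow> ('a \<Rightarrow> 'a \<Rightarrow> bool) \<Rightarrow> nat \<Rightarrow> (nat \<Rightarrow> 'a) \<Rightarrow> (nat \<Rightarrow> 'a) \<Rightarrow> bool" where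
  "induced_matching V E t u v \<longleftrightarrow>
     (\<forall>i<t. u i \<in> V \<and> v i \<in> V) \<and>
     inj_on u {..<t} \<and> inj_on v {..<t} \<and> u ` {..<t} \<inter> v ` {..<t} = {} \<and>
     (\<forall>i<t. \<forall>j<t. E (u i) (v j) \<longleftrightarrow> i = j)"

lemma nu_bi_eq_Max_induced_matching:
  "nu_bi V E = Max {t. \<exists>u v. induced_matching V E t u v}"
  by (simp add: nu_bi_def induced_matching_def)

lemma induced_matching_le_card:
  assumes "finite V" and "induced_matching V E t u v"
  shows "t \<le> card V"
proof -
  have "u ` {..<t} \<subseteq> V" and "inj_on u {..<t}"
    using assms(2) by (auto simp: induced_matching_def)
  have "t = card (u ` {..<t})"
    using card_image[OF \<open>inj_on u {..<t}\<close>] by simp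
  also have "\<dots> \<le> card V"
    by (rule card_mono[OF assms(1) \<open>u ` {..<t} \<subseteq> V\<close>])
  finally show ?thesis .
qed

lemma induced_matching_le_nu_bi:
  assumes "finite V" and "induced_matching V E t u v"
  shows "t \<le> nu_bi V E"
proof -
  have "finite {t. \<exists>u v. induced_matching V E t u v}"
    by (rule finite_subset[of _ "{..card V}"])
      (auto dest: induced_matching_le_card[OF assms(1)])
  then show ?thesis
    unfolding nu_bi_eq_Max_induced_matching using assms(2) by (blast intro: Max_ge)
qed

lemma induced_matching_of_private_neighbours:
  assumes "finite S" and "S \<subseteq> V"
    and "\<And>s. s \<in> S \<Longrightarrow> w s \<in> V \<and> w s \<notin> S \<and> E s (w s)"
    and "\<And>s t. s \<in> S \<Longrightarrow> t \<in> S \<Longrightarrow> E t (w s) \<Longrightarrow> t = s"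
  shows "\<exists>u v. induced_matching V E (card S) u v"
proof -
  obtain u where u: "bij_betw u {..<card S} S"
    using ex_bij_betw_nat_finite[OF assms(1)] by (auto simp: atLeast0LessThan)
  then have u_S: "u i \<in> S" if "i < card S" for i
    using that by (auto simp: bij_betw_def)
  have u_inj: "inj_on u {..<card S}"
    using u by (simp add: bij_betw_def)
  have edge_iff: "E (u i) (w (u j)) \<longleftrightarrow> i = j" if "i < card S" "j < card S" for i j
  proof
    assume "E (u i) (w (u j))"
    then have "u i = u j"
      using assms(4) u_S that by blast
    then show "i = j"
      using inj_onD[OF u_inj] that by blast
  qed (use assms(3) u_S that in blast)
  have w_inj: "inj_on (w \<circ> u) {..<card S}"
  proof (rule inj_onI)
    fix i j assume "i \<in> {..<card S}" "j \<in> {..<card S}" "(w \<circ> u) i = (w \<circ> u) j"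
    then show "i = j"
      using edge_iff[of i i] edge_iff[of i j] by simp
  qed
  have "u ` {..<card S} \<inter> (w \<circ> u) ` {..<card S} = {}"
    using u_S assms(3) by fastforce
  moreover have "\<forall>i<card S. u i \<in> V \<and> (w \<circ> u) i \<in> V"
    using u_S assms(2,3) by auto
  ultimately have "induced_matching V E (card S) u (w \<circ> u)"
    unfolding induced_matching_def using u_inj w_inj edge_iff by simp
  then show ?thesis
    by blast
qed

theorem lemma2p20:
  fixes V :: "'a set" and E :: "'a \<Rightarrow> 'a \<Rightarrow> bool" and d :: nat
  assumes "finite_graph V E"
    and "d = vc_dim V (MIS_family V E)"
    and "d \<ge> 1"
  shows "d \<le> nu_bi V E"
proof -
  have "finite V" and edges_in_V: "\<And>x y. E x y \<Longrightarrow> x \<in> V \<and> y \<in> V"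
    using assms(1) by (auto simp: finite_graph_def)
  then have "MIS_family V E \<noteq> {}"
    using maximal_independent_set_exists by (auto simp: MIS_family_def)
  then obtain S where S: "S \<subseteq> V" "shatters (MIS_family V E) S" and "card S = d"
    using vc_dim_attained[OF \<open>finite V\<close>] assms(2) by metis
  obtain w where w: "\<And>s. s \<in> S \<Longrightarrow> E s (w s) \<and> w s \<notin> S \<and> (\<forall>t\<in>S. E t (w s) \<longrightarrow> t = s)"
    using shattered_by_MIS_family_private_neighbour[OF assms(1) S] by metis
  have "\<exists>u v. induced_matching V E d u v"
    using induced_matching_of_private_neighbours[of S V w E] w edges_in_V S(1)
      finite_subset[OF S(1) \<open>finite V\<close>] \<open>card S = d\<close> by blast
  then show ?thesis
    using induced_matching_le_nu_bi[OF \<open>finite V\<close>] by blast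
qed

end
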